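(* Let $n$ be even and $f:\mathbb{F}_{2^n}\to\mathbb{F}_{2^n}$ be a map with exactly $t$ bent component functions. Then $N(f)\geq t+2^n$ and \[|\mathrm{Im}(f)|\leq 2^n-\tfrac12\left(\sqrt{4t+1}-1\right).\]
   Context: $\mathrm{Tr}$ is the absolute trace and $W_f(b,a)=\sum_{x}(-1)^{\mathrm{Tr}(bf(x)+ax)}$. The component functions of $f$ are $x\mapsto\mathrm{Tr}(\lambda f(x))$, $\lambda\neq0$; such a component is bent if $|W_f(\lambda,a)|=2^{n/2}$ for all $a\in\mathbb{F}_{2^n}$. $N(f)$ is the number of pairs $(x,y)$ with $f(x)=f(y)$. *)

theory Defs
  imports Complex_Main
begin

definition abs_trace :: "nat \<Rightarrow> 'a::field \<Rightarrow> 'a" where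
  "abs_trace n x = (\<Sum>i<n. x ^ (2 ^ i))"

text \<open>(-1)^Tr(z), as a real number (Tr(z) lies in the prime field {0,1}).\<close>
definition trace_sign :: "nat \<Rightarrow> 'a::field \<Rightarrow> real" where
  "trace_sign n z = (if abs_trace n z = 0 then 1 else -1)"

definition walsh :: "nat \<Rightarrow> ('a::{finite,field} \<Rightarrow> 'a) \<Rightarrow> 'a \<Rightarrow> 'a \<Rightarrow> real" where
  "walsh n f b a = (\<Sum>x\<in>UNIV. trace_sign n (b * f x + a * x))"

text \<open>The component x |-> Tr(lam f(x)), lam nonzero, is bent.\<close>
definition bent_component :: "nat \<Rightarrow> ('a::{finite,field} \<Rightarrow> 'a) \<Rightarrow> 'a \<Rightarrow> bool" where
  "bent_component n f lam \<longleftrightarrow> lam \<noteq> 0 \<and> (\<forall>a. \<bar>walsh n f lam a\<bar> = 2 powr (real n / 2))"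

definition collision_count :: "('a::finite \<Rightarrow> 'b) \<Rightarrow> nat" where
  "collision_count f = card {(x, y). f x = f y}"

end

theory Submission
  imports Defs "HOL-Computational_Algebra.Primes" "HOL-Computational_Algebra.Polynomial"
begin

text \<open>
  Expanding the squares of the Walsh values \<open>W\<^sub>f(b,0)\<close> and using orthogonality of the additive
  characters \<open>b \<mapsto> (-1)\<^bsup>Tr(bc)\<^esup>\<close> gives \<open>\<Sum>\<^sub>b W\<^sub>f(b,0)\<^sup>2 = 2\<^sup>n N(f)\<close>. The term \<open>b = 0\<close>
  contributes \<open>2\<^bsup>2n\<^esup>\<close> and each bent component \<open>2\<^sup>n\<close>, whence \<open>N(f) \<ge> 2\<^sup>n + t\<close>.
  Conversely, if \<open>f\<close> misses \<open>k\<close> values, the fibre sizes exceed \<open>1\<close> by amounts summing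
  to \<open>k\<close>, so \<open>N(f) \<le> 2\<^sup>n + k\<^sup>2 + k\<close>. Hence \<open>t \<le> k\<^sup>2 + k\<close>, which is the bound on \<open>|Im(f)|\<close>.
\<close>

text \<open>
  The library proves this for the sort \<open>finite_field\<close>, which a type variable of sort
  \<open>{finite,field}\<close> does not carry, so the argument is repeated here.
\<close>
lemma power_card_UNIV_eq_self:
  fixes x :: "'a::{finite,field}"
  shows "x ^ card (UNIV :: 'a set) = x"
proof (cases "x = 0")
  case False
  have "x ^ card (UNIV - {0 :: 'a}) * \<Prod>(UNIV - {0 :: 'a}) = (\<Prod>y\<in>UNIV - {0}. x * y)"
    by (simp add: prod.distrib)
  also have "\<dots> = \<Prod>(UNIV - {0 :: 'a})"
    by (rule prod.reindex_bij_witness[of _ "\<lambda>y. y / x" "\<lambda>y. x * y"]) (use False in auto)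
  finally have "x ^ card (UNIV - {0 :: 'a}) = 1"
    by simp
  then show ?thesis
    by (simp add: card_Diff_subset card_gt_0_iff power_eq_if)
qed (simp add: card_gt_0_iff)

lemma CHAR_eq_2_if_even_card:
  assumes "even (card (UNIV :: 'a::{finite,field} set))"
  shows "CHAR('a) = 2"
proof -
  have "(-1 :: 'a) ^ card (UNIV :: 'a set) = 1"
    using assms by simp
  then have "(-1 :: 'a) = 1"
    by (simp add: power_card_UNIV_eq_self)
  moreover have "(of_nat 2 :: 'a) = 1 - (-1)"
    by simp
  ultimately have "of_nat 2 = (0 :: 'a)"
    by simp
  then have "CHAR('a) dvd 2"
    by (simp only: of_nat_eq_0_iff_char_dvd)
  then show ?thesis
    using two_is_prime_nat CHAR_not_1 unfolding prime_nat_iff by (metis One_nat_def)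
qed

lemma abs_trace_0 [simp]: "abs_trace n 0 = 0"
  by (simp add: abs_trace_def power_0_left)

lemma abs_trace_add:
  fixes x y :: "'a::field"
  assumes "CHAR('a) = 2"
  shows "abs_trace n (x + y) = abs_trace n x + abs_trace n y"
proof -
  have "(x + y) ^ 2 ^ i = x ^ 2 ^ i + y ^ 2 ^ i" for i
    by (rule freshmans_dream') (simp_all add: assms)
  then show ?thesis
    by (simp add: abs_trace_def sum.distrib)
qed

lemma walsh_0_0:
  fixes f :: "'a::{finite,field} \<Rightarrow> 'a"
  shows "walsh n f 0 0 = card (UNIV :: 'a set)"
  by (simp add: walsh_def trace_sign_def)

lemma bent_component_walsh_squared:
  assumes "bent_component n f lam"
  shows "walsh n f lam a ^ 2 = 2 ^ n"
proof -
  have "walsh n f lam a ^ 2 = \<bar>walsh n f lam a\<bar> ^ 2"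
    by simp
  also have "\<dots> = (2 powr (real n / 2)) ^ 2"
    using assms by (simp add: bent_component_def)
  also have "\<dots> = 2 powr real n"
    by (simp add: power2_eq_square flip: powr_add)
  also have "\<dots> = 2 ^ n"
    by (simp add: powr_realpow)
  finally show ?thesis .
qed

context
  fixes n :: nat
  assumes card_UNIV: "card (UNIV :: 'a::{finite,field} set) = 2 ^ n"
begin

lemma exponent_pos: "n > 0"
proof (rule ccontr)
  assume "\<not> n > 0"
  then have "card (UNIV :: 'a set) = 1"
    using card_UNIV by simp
  then obtain a :: 'a where "UNIV = {a}"
    using card_1_singletonE by blast
  then show False
    by (metis singletonD UNIV_I zero_neq_one)
qed

lemma CHAR_eq_2: "CHAR('a) = 2"
  using exponent_pos by (intro CHAR_eq_2_if_even_card) (simp add: card_UNIV)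

lemma abs_trace_square: "abs_trace n (x :: 'a) ^ 2 = abs_trace n x"
proof -
  have "abs_trace n x ^ 2 = (\<Sum>i<n. (x ^ 2 ^ i) ^ 2)"
    unfolding abs_trace_def by (rule freshmans_dream_sum'[where n = 1]) (simp_all add: CHAR_eq_2)
  also have "\<dots> = (\<Sum>i<n. x ^ 2 ^ Suc i)"
    by (simp only: power_Suc2 power_mult)
  also have "\<dots> = abs_trace n x"
  proof -
    have "x + (\<Sum>i<n. x ^ 2 ^ Suc i) = (\<Sum>i<Suc n. x ^ 2 ^ i)"
      by (simp only: sum.lessThan_Suc_shift power_0 power_one_right)
    also have "\<dots> = abs_trace n x + x"
      using power_card_UNIV_eq_self[of x] by (simp add: abs_trace_def card_UNIV)
    finally show ?thesis
      by (simp add: add.commute)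
  qed
  finally show ?thesis .
qed

lemma abs_trace_eq_0_or_1: "abs_trace n (x :: 'a) = 0 \<or> abs_trace n x = 1"
proof -
  have "abs_trace n x * (abs_trace n x - 1) = 0"
    using abs_trace_square[of x] by (simp add: algebra_simps power2_eq_square)
  then show ?thesis
    by simp
qed

text \<open>
  \<open>Tr\<close> is a polynomial of degree \<open>2\<^sup>n\<^sup>-\<^sup>1\<close>, so it cannot vanish on all \<open>2\<^sup>n\<close> field elements.
\<close>
lemma ex_abs_trace_neq_0: "\<exists>z :: 'a. abs_trace n z \<noteq> 0"
proof (rule ccontr)
  assume "\<not> (\<exists>z :: 'a. abs_trace n z \<noteq> 0)"
  define p :: "'a poly" where "p = (\<Sum>i<n. monom 1 (2 ^ i))"
  have poly_p: "poly p z = abs_trace n z" for z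
    by (simp add: p_def abs_trace_def poly_sum poly_monom)
  have "coeff p (2 ^ (n - 1)) = (\<Sum>i<n. if i = n - 1 then 1 else 0)"
    unfolding p_def coeff_sum by (intro sum.cong) auto
  then have "p \<noteq> 0"
    using exponent_pos by auto
  have "degree p \<le> 2 ^ (n - 1)"
  proof (rule degree_le, intro allI impI)
    fix j :: nat
    assume "2 ^ (n - 1) < j"
    moreover have "(2 :: nat) ^ i \<le> 2 ^ (n - 1)" if "i < n" for i
      using that by (intro power_increasing) auto
    ultimately show "coeff p j = 0"
      unfolding p_def coeff_sum by (intro sum.neutral) fastforce
  qed
  moreover have "{z. poly p z = 0} = UNIV"
    using \<open>\<not> (\<exists>z. abs_trace n z \<noteq> 0)\<close> poly_p by auto
  ultimately have "card (UNIV :: 'a set) \<le> 2 ^ (n - 1)"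
    using card_poly_roots_bound[OF \<open>p \<noteq> 0\<close>] by simp
  then show False
    using card_UNIV exponent_pos by simp
qed

lemma trace_sign_add: "trace_sign n (u + v :: 'a) = trace_sign n u * trace_sign n v"
proof -
  have "(1 :: 'a) + 1 = 0"
    using CHAR_eq_2 by (metis of_nat_1 of_nat_CHAR of_nat_add one_add_one)
  then show ?thesis
    using abs_trace_eq_0_or_1[of u] abs_trace_eq_0_or_1[of v]
    by (auto simp: trace_sign_def abs_trace_add[OF CHAR_eq_2])
qed

lemma sum_trace_sign_mult:
  "(\<Sum>b\<in>UNIV. trace_sign n (b * c :: 'a)) = (if c = 0 then 2 ^ n else 0)"
proof (cases "c = 0")
  case True
  then show ?thesis
    by (simp add: trace_sign_def card_UNIV)
next
  case False
  obtain z :: 'a where "abs_trace n z \<noteq> 0"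
    using ex_abs_trace_neq_0 by blast
  then have z: "trace_sign n z = -1"
    by (simp add: trace_sign_def)
  have shift: "(b + z / c) * c = b * c + z" for b
    using False by (simp add: distrib_right)
  have "(\<Sum>b\<in>UNIV. trace_sign n (b * c)) = (\<Sum>b\<in>UNIV. trace_sign n ((b + z / c) * c))"
    by (rule sum.reindex_bij_witness[where i = "\<lambda>b. b + z / c" and j = "\<lambda>b. b - z / c"]) auto
  also have "\<dots> = - (\<Sum>b\<in>UNIV. trace_sign n (b * c))"
    by (simp only: shift trace_sign_add z mult_minus1_right sum_negf)
  finally show ?thesis
    using False by simp
qed

lemma add_eq_0_iff_eq: "a + b = (0 :: 'a) \<longleftrightarrow> a = b"
  by (metis minus_CHAR_2[OF CHAR_eq_2] eq_iff_diff_eq_0)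

lemma sum_walsh_zero_squared:
  fixes f :: "'a \<Rightarrow> 'a"
  shows "(\<Sum>b\<in>UNIV. walsh n f b 0 ^ 2) = 2 ^ n * real (collision_count f)"
proof -
  have "(\<Sum>b\<in>UNIV. walsh n f b 0 ^ 2)
      = (\<Sum>b\<in>UNIV. \<Sum>x\<in>UNIV. \<Sum>y\<in>UNIV. trace_sign n (b * (f x + f y)))"
    by (simp add: walsh_def power2_eq_square sum_product distrib_left trace_sign_add)
  also have "\<dots> = (\<Sum>x\<in>UNIV. \<Sum>b\<in>UNIV. \<Sum>y\<in>UNIV. trace_sign n (b * (f x + f y)))"
    by (rule sum.swap)
  also have "\<dots> = (\<Sum>x\<in>UNIV. \<Sum>y\<in>UNIV. \<Sum>b\<in>UNIV. trace_sign n (b * (f x + f y)))"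
    by (rule sum.cong[OF refl], rule sum.swap)
  also have "\<dots> = (\<Sum>(x, y)\<in>UNIV. if f x = f y then 2 ^ n else 0)"
    by (simp only: sum_trace_sign_mult add_eq_0_iff_eq sum.cartesian_product UNIV_Times_UNIV)
  also have "\<dots> = (\<Sum>(x, y)\<in>{(x, y). f x = f y}. 2 ^ n)"
    by (simp add: sum.If_cases case_prod_unfold)
  also have "\<dots> = 2 ^ n * real (collision_count f)"
    by (simp add: collision_count_def)
  finally show ?thesis .
qed

lemma card_bent_components_le_collision_count:
  fixes f :: "'a \<Rightarrow> 'a"
  shows "2 ^ n + card {lam. bent_component n f lam} \<le> collision_count f"
proof -
  define B where "B = {lam. bent_component n f lam}"
  have "0 \<notin> B"
    by (simp add: B_def bent_component_def)
  have "(2 ^ n) ^ 2 + real (card B) * 2 ^ n = walsh n f 0 0 ^ 2 + (\<Sum>b\<in>B. walsh n f b 0 ^ 2)"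
    by (simp add: walsh_0_0 card_UNIV B_def bent_component_walsh_squared)
  also have "\<dots> = (\<Sum>b\<in>insert 0 B. walsh n f b 0 ^ 2)"
    using \<open>0 \<notin> B\<close> by simp
  also have "\<dots> \<le> (\<Sum>b\<in>UNIV. walsh n f b 0 ^ 2)"
    by (rule sum_mono2) simp_all
  also have "\<dots> = 2 ^ n * real (collision_count f)"
    by (rule sum_walsh_zero_squared)
  finally have "2 ^ n * (2 ^ n + real (card B)) \<le> 2 ^ n * real (collision_count f)"
    by (simp add: power2_eq_square algebra_simps)
  then have "real (2 ^ n + card B) \<le> real (collision_count f)"
    by simp
  then show ?thesis
    unfolding B_def of_nat_le_iff .
qed

end

lemma sum_squares_le_square_sum:
  fixes d :: "'b \<Rightarrow> 'c::linordered_semidom"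
  assumes "\<And>i. i \<in> A \<Longrightarrow> d i \<ge> 0"
  shows "(\<Sum>i\<in>A. d i ^ 2) \<le> (\<Sum>i\<in>A. d i) ^ 2"
proof (cases "finite A")
  case True
  have "(\<Sum>i\<in>A. d i ^ 2) \<le> (\<Sum>i\<in>A. \<Sum>j\<in>A. d i * d j)"
  proof (rule sum_mono)
    fix i
    assume "i \<in> A"
    then show "d i ^ 2 \<le> (\<Sum>j\<in>A. d i * d j)"
      unfolding power2_eq_square
      by (rule member_le_sum[where f = "\<lambda>j. d i * d j"]) (use True assms \<open>i \<in> A\<close> in auto)
  qed
  also have "\<dots> = (\<Sum>i\<in>A. d i) ^ 2"
    by (simp add: power2_eq_square sum_product)
  finally show ?thesis .
qed simp

lemma collision_count_eq_sum_card_fibres: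
  fixes f :: "'a::finite \<Rightarrow> 'b"
  shows "collision_count f = (\<Sum>v\<in>range f. card (f -` {v}) ^ 2)"
proof -
  have "{(x, y). f x = f y} = (\<Union>v\<in>range f. f -` {v} \<times> f -` {v})"
    by auto
  also have "card \<dots> = (\<Sum>v\<in>range f. card (f -` {v} \<times> f -` {v}))"
    by (rule card_UN_disjoint) auto
  finally show ?thesis
    by (simp add: collision_count_def card_cartesian_product power2_eq_square)
qed

lemma card_UNIV_eq_sum_card_fibres:
  fixes f :: "'a::finite \<Rightarrow> 'b"
  shows "card (UNIV :: 'a set) = (\<Sum>v\<in>range f. card (f -` {v}))"
proof -
  have "UNIV = (\<Union>v\<in>range f. f -` {v})"
    by auto
  also have "card \<dots> = (\<Sum>v\<in>range f. card (f -` {v}))"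
    by (rule card_UN_disjoint) auto
  finally show ?thesis .
qed

lemma collision_count_le_card_range:
  fixes f :: "'a::finite \<Rightarrow> 'b"
  assumes "k = card (UNIV :: 'a set) - card (range f)"
  shows "collision_count f \<le> card (UNIV :: 'a set) + k ^ 2 + k"
proof -
  define d where "d v = card (f -` {v}) - 1" for v
  have fibre: "card (f -` {v}) = d v + 1" if "v \<in> range f" for v
  proof -
    from that obtain x where "x \<in> f -` {v}"
      by auto
    then have "card (f -` {v}) > 0"
      by (auto simp: card_gt_0_iff)
    then show ?thesis
      by (simp add: d_def)
  qed
  have "card (UNIV :: 'a set) = (\<Sum>v\<in>range f. d v) + card (range f)"
    by (simp add: card_UNIV_eq_sum_card_fibres[of f] fibre sum_Suc)
  then have sum_d: "(\<Sum>v\<in>range f. d v) = k"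
    using assms by simp
  have "collision_count f = (\<Sum>v\<in>range f. d v ^ 2 + 2 * d v + 1)"
    unfolding collision_count_eq_sum_card_fibres by (intro sum.cong) (simp_all add: fibre power2_eq_square)
  also have "\<dots> = (\<Sum>v\<in>range f. d v ^ 2) + 2 * k + card (range f)"
    by (simp only: sum.distrib sum_d card_eq_sum flip: sum_distrib_left)
  also have "\<dots> \<le> k ^ 2 + 2 * k + card (range f)"
    using sum_squares_le_square_sum[of "range f" d] sum_d by simp
  also have "\<dots> = card (UNIV :: 'a set) + k ^ 2 + k"
    using assms card_image_le[of UNIV f] by simp
  finally show ?thesis .
qed

lemma half_sqrt_le_if_le_square_add:
  fixes t k :: real
  assumes "t \<le> k ^ 2 + k" and "k \<ge> 0"
  shows "(sqrt (4 * t + 1) - 1) / 2 \<le> k"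
proof -
  have "sqrt (4 * t + 1) \<le> sqrt ((2 * k + 1) ^ 2)"
    using assms(1) by (intro real_sqrt_le_mono) (simp add: power2_eq_square algebra_simps)
  then show ?thesis
    using assms(2) by simp
qed

theorem theorem7p4:
  fixes f :: "'a::{finite,field} \<Rightarrow> 'a" and n t :: nat
  assumes "card (UNIV :: 'a set) = 2 ^ n"
    and "even n"
    and "t = card {lam. bent_component n f lam}"
  shows "collision_count f \<ge> t + 2 ^ n \<and>
         real (card (range f)) \<le> 2 ^ n - (sqrt (4 * real t + 1) - 1) / 2"
proof -
  define k where "k = 2 ^ n - card (range f)"
  have range_le: "card (range f) \<le> 2 ^ n"
    using card_image_le[of UNIV f] assms(1) by simp
  have lower: "2 ^ n + t \<le> collision_count f"
    using card_bent_components_le_collision_count[OF assms(1)] assms(3) by simp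
  moreover have "collision_count f \<le> 2 ^ n + k ^ 2 + k"
    using collision_count_le_card_range[of k f] assms(1) k_def by simp
  ultimately have "t \<le> k ^ 2 + k"
    by simp
  then have "real t \<le> real k ^ 2 + real k"
    by (metis of_nat_add of_nat_le_iff of_nat_power)
  then have "(sqrt (4 * real t + 1) - 1) / 2 \<le> real k"
    by (rule half_sqrt_le_if_le_square_add) simp
  moreover have "real k = 2 ^ n - real (card (range f))"
    using range_le by (simp add: k_def of_nat_diff)
  ultimately show ?thesis
    using lower by (intro conjI) linarith+
qed

end
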